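(* Let $A$ and $G$ be cubic graphs. Then every graph $G\circ A^-$ has girth at least the girth $g(A)$ of $A$.
   Context: Let $G$ and $A$ be $3$-regular (simple) graphs, let $a$ be a vertex of $A$ and $A^-=A-a$. A graph $G\circ A^-$ is any graph obtained by replacing each vertex $v$ of $G$ by a copy $A^-_v$ of $A^-$ and, for each edge $uv$ of $G$, adding an edge joining a vertex of degree $2$ of $A^-_u$ to a vertex of degree $2$ of $A^-_v$, so that each degree-$2$ vertex of each copy is incident with exactly one added edge (the choices of $a$ and of these edges are arbitrary). *)

theory Defs
  imports Main "HOL-Library.Extended_Nat"
begin

definition simple_graph :: "'a set \<Rightarrow> ('a \<Rightarrow> 'a \<Rightarrow> bool) \<Rightarrow> bool" where
  "simple_graph V E \<longleftrightarrow> finite V \<and> (\<forall>x y. E x y \<longrightarrow> x \<in> V \<and> y \<in> V)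
     \<and> (\<forall>x y. E x y \<longrightarrow> E y x) \<and> (\<forall>x. \<not> E x x)"

definition degree :: "'a set \<Rightarrow> ('a \<Rightarrow> 'a \<Rightarrow> bool) \<Rightarrow> 'a \<Rightarrow> nat" where
  "degree V E x = card {y \<in> V. E x y}"

definition cubic :: "'a set \<Rightarrow> ('a \<Rightarrow> 'a \<Rightarrow> bool) \<Rightarrow> bool" where
  "cubic V E \<longleftrightarrow> simple_graph V E \<and> (\<forall>x\<in>V. degree V E x = 3)"

definition is_cycle :: "'a set \<Rightarrow> ('a \<Rightarrow> 'a \<Rightarrow> bool) \<Rightarrow> 'a list \<Rightarrow> bool" where
  "is_cycle V E cs \<longleftrightarrow> 3 \<le> length cs \<and> distinct cs \<and> set cs \<subseteq> V
     \<and> (\<forall>i < length cs. E (cs ! i) (cs ! ((i + 1) mod length cs)))"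

text \<open>Girth: length of a shortest cycle (infinity if there is none).\<close>
definition girth :: "'a set \<Rightarrow> ('a \<Rightarrow> 'a \<Rightarrow> bool) \<Rightarrow> enat" where
  "girth V E = (INF cs \<in> {cs. is_cycle V E cs}. enat (length cs))"

text \<open>The construction G o A^-: the vertex set is VG \<times> (VA - {a}), vertex (v,x) being
  the copy of x in A^-_v. F is the relation of added edges.\<close>
definition circ_matching ::
  "'a set \<Rightarrow> ('a \<Rightarrow> 'a \<Rightarrow> bool) \<Rightarrow> 'b set \<Rightarrow> ('b \<Rightarrow> 'b \<Rightarrow> bool) \<Rightarrow> 'b
    \<Rightarrow> ('a \<times> 'b \<Rightarrow> 'a \<times> 'b \<Rightarrow> bool) \<Rightarrow> bool" where
  "circ_matching VG EG VA EA a F \<longleftrightarrow>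
     (\<forall>p q. F p q \<longrightarrow> F q p)
   \<and> (\<forall>u x v y. F (u, x) (v, y) \<longrightarrow>
        EG u v \<and> x \<in> VA - {a} \<and> y \<in> VA - {a}
        \<and> degree (VA - {a}) EA x = 2 \<and> degree (VA - {a}) EA y = 2)
   \<and> (\<forall>u v. EG u v \<longrightarrow> (\<exists>!xy. F (u, fst xy) (v, snd xy)))
   \<and> (\<forall>u\<in>VG. \<forall>x\<in>VA - {a}. degree (VA - {a}) EA x = 2 \<longrightarrow> (\<exists>!q. F (u, x) q))"

definition circ_edges ::
  "('b \<Rightarrow> 'b \<Rightarrow> bool) \<Rightarrow> ('a \<times> 'b \<Rightarrow> 'a \<times> 'b \<Rightarrow> bool) \<Rightarrow> 'a \<times> 'b \<Rightarrow> 'a \<times> 'b \<Rightarrow> bool" where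
  "circ_edges EA F p q \<longleftrightarrow> (fst p = fst q \<and> EA (snd p) (snd q)) \<or> F p q"

end

theory Submission
  imports Defs
begin

text \<open>A cycle of \<open>G \<circ> A\<^sup>-\<close> that stays inside one copy \<open>A\<^sup>-\<^sub>v\<close> is a cycle of \<open>A\<close>.
  Otherwise take a maximal run \<open>x\<^sub>1, \<dots>, x\<^sub>k\<close> of the cycle inside one copy. Its ends are
  incident with added edges, so they have degree 2 in \<open>A - a\<close> and are therefore neighbours
  of \<open>a\<close> in the cubic graph \<open>A\<close>; since every vertex carries only one added edge, \<open>k \<ge> 2\<close>.
  Closing the run through \<open>a\<close> gives a cycle \<open>a, x\<^sub>1, \<dots>, x\<^sub>k\<close> of \<open>A\<close>, which is no longer
  than the original cycle because that one also visits another copy.\<close>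

lemma is_cycle_iff_successively:
  "is_cycle V E cs \<longleftrightarrow> 3 \<le> length cs \<and> distinct cs \<and> set cs \<subseteq> V
     \<and> successively E cs \<and> E (last cs) (hd cs)"
proof (cases "cs = []")
  case False
  let ?n = "length cs"
  have "(\<forall>i < ?n. E (cs ! i) (cs ! ((i + 1) mod ?n)))
      \<longleftrightarrow> (\<forall>i. Suc i < ?n \<longrightarrow> E (cs ! i) (cs ! Suc i)) \<and> E (cs ! (?n - 1)) (cs ! 0)"
    (is "?L \<longleftrightarrow> ?R")
  proof
    assume L: ?L
    have "E (cs ! i) (cs ! Suc i)" if "Suc i < ?n" for i
      using L[rule_format, of i] that by simp
    moreover have "E (cs ! (?n - 1)) (cs ! 0)"
      using L[rule_format, of "?n - 1"] False by simp
    ultimately show ?R by blast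
  next
    assume R: ?R
    show ?L
    proof (intro allI impI)
      fix i assume "i < ?n"
      then consider "Suc i < ?n" | "i = ?n - 1" by linarith
      then show "E (cs ! i) (cs ! ((i + 1) mod ?n))"
        by cases (use R False in auto)
    qed
  qed
  then show ?thesis
    using False by (simp add: is_cycle_def successively_conv_nth hd_conv_nth last_conv_nth)
qed (simp add: is_cycle_def)

lemma is_cycle_append_swap:
  assumes "is_cycle V E (xs @ ys)"
  shows "is_cycle V E (ys @ xs)"
proof (cases "xs = [] \<or> ys = []")
  case False
  then show ?thesis
    using assms by (auto simp: is_cycle_iff_successively successively_append_iff)
qed (use assms in auto)

lemma is_cycle_Cons_path:
  assumes "2 \<le> length xs" "distinct xs" "set xs \<subseteq> V" "a \<in> V" "a \<notin> set xs"
    and "successively E xs" "E a (hd xs)" "E (last xs) a"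
  shows "is_cycle V E (a # xs)"
  using assms by (auto simp: is_cycle_iff_successively successively_Cons)

lemma girth_le_girthI:
  assumes "\<And>cs. is_cycle V' E' cs \<Longrightarrow> \<exists>ds. is_cycle V E ds \<and> length ds \<le> length cs"
  shows "girth V E \<le> girth V' E'"
  unfolding girth_def
proof (rule INF_greatest)
  fix cs assume "cs \<in> {cs. is_cycle V' E' cs}"
  then obtain ds where "is_cycle V E ds" "length ds \<le> length cs"
    using assms by blast
  then show "(INF ds \<in> {ds. is_cycle V E ds}. enat (length ds)) \<le> enat (length cs)"
    by (intro INF_lower2[of ds]) simp_all
qed

lemma split_at_first_change:
  assumes "\<exists>p\<in>set cs. f p \<noteq> f (hd cs)"
  obtains xs ys where "cs = xs @ ys" "xs \<noteq> []" "ys \<noteq> []"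
    "\<forall>p\<in>set xs. f p = f (hd cs)" "f (hd ys) \<noteq> f (hd cs)"
proof
  let ?P = "\<lambda>p. f p = f (hd cs)"
  show "cs = takeWhile ?P cs @ dropWhile ?P cs" by simp
  show "takeWhile ?P cs \<noteq> []" using assms by (cases cs) auto
  show "dropWhile ?P cs \<noteq> []" using assms by simp
  then show "f (hd (dropWhile ?P cs)) \<noteq> f (hd cs)" using hd_dropWhile[of ?P cs] by simp
  show "\<forall>p\<in>set (takeWhile ?P cs). f p = f (hd cs)" by (auto dest: set_takeWhileD)
qed

lemma inj_on_snd_if_fst_const: "\<forall>p\<in>S. fst p = u \<Longrightarrow> inj_on snd S"
  by (intro inj_onI) (simp add: prod_eq_iff)

locale circ_construction =
  fixes VG :: "'a set" and EG :: "'a \<Rightarrow> 'a \<Rightarrow> bool"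
    and VA :: "'b set" and EA :: "'b \<Rightarrow> 'b \<Rightarrow> bool" and a :: 'b
    and F :: "'a \<times> 'b \<Rightarrow> 'a \<times> 'b \<Rightarrow> bool"
  assumes G: "simple_graph VG EG" and A: "cubic VA EA" and root: "a \<in> VA"
    and M: "circ_matching VG EG VA EA a F"
begin

lemma EA_sym: "EA x y \<Longrightarrow> EA y x"
  using A unfolding cubic_def simple_graph_def by blast

lemma F_sym: "F p q \<Longrightarrow> F q p"
  using M unfolding circ_matching_def by blast

lemma F_endpoint:
  assumes "F p q"
  shows "fst p \<in> VG" "fst p \<noteq> fst q" "snd p \<in> VA - {a}" "degree (VA - {a}) EA (snd p) = 2"
  using assms M G unfolding circ_matching_def simple_graph_def
  by (metis prod.collapse)+

lemma F_partner_unique: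
  assumes "F p q" "F p q'"
  shows "q = q'"
proof -
  have "\<exists>!q. F p q"
    using M F_endpoint[OF assms(1)] unfolding circ_matching_def by (metis prod.collapse)
  with assms show ?thesis by blast
qed

lemma F_endpoint_adj_root:
  assumes "F p q"
  shows "EA (snd p) a"
proof (rule ccontr)
  assume "\<not> EA (snd p) a"
  then have "{y \<in> VA. EA (snd p) y} = {y \<in> VA - {a}. EA (snd p) y}" by auto
  then have "degree VA EA (snd p) = 2"
    using F_endpoint(4)[OF assms] unfolding degree_def by simp
  moreover have "degree VA EA (snd p) = 3"
    using A F_endpoint(3)[OF assms] unfolding cubic_def by auto
  ultimately show False by simp
qed

lemma circ_edges_same_copy:
  assumes "circ_edges EA F p q" "fst p = fst q"
  shows "EA (snd p) (snd q)"
  using assms F_endpoint(2) unfolding circ_edges_def by blast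

abbreviation VC where "VC \<equiv> VG \<times> (VA - {a})"
abbreviation EC where "EC \<equiv> circ_edges EA F"

lemma path_in_copy:
  assumes "successively EC xs" and "\<forall>p\<in>set xs. fst p = u"
  shows "successively EA (map snd xs)"
  unfolding successively_map
  using assms(1) by (rule successively_mono) (use assms(2) circ_edges_same_copy in auto)

lemma cycle_in_copy:
  assumes cyc: "is_cycle VC EC cs" and copy: "\<forall>p\<in>set cs. fst p = u"
  shows "is_cycle VA EA (map snd cs)"
proof -
  have ne: "cs \<noteq> []" using cyc by (auto simp: is_cycle_def)
  have "inj_on snd (set cs)" using copy by (rule inj_on_snd_if_fst_const)
  moreover have "successively EA (map snd cs)"
    using cyc copy by (intro path_in_copy[where u = u]) (simp_all add: is_cycle_iff_successively)
  moreover have "EA (snd (last cs)) (snd (hd cs))"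
  proof (rule circ_edges_same_copy)
    show "fst (last cs) = fst (hd cs)" using copy ne by simp
    show "EC (last cs) (hd cs)" using cyc by (simp add: is_cycle_iff_successively)
  qed
  ultimately show ?thesis
    using cyc ne by (auto simp: is_cycle_iff_successively distinct_map last_map hd_map)
qed

lemma cycle_leaving_copy:
  assumes cyc: "is_cycle VC EC cs" and cross: "fst (last cs) \<noteq> fst (hd cs)"
  shows "\<exists>ds. is_cycle VA EA ds \<and> length ds \<le> length cs"
proof -
  have "cs \<noteq> []" using cyc by (auto simp: is_cycle_def)
  then have "\<exists>p\<in>set cs. fst p \<noteq> fst (hd cs)" using cross last_in_set by blast
  then obtain xs ys where cs: "cs = xs @ ys" and "xs \<noteq> []" "ys \<noteq> []"
    and copy: "\<forall>p\<in>set xs. fst p = fst (hd cs)" and hd_ys: "fst (hd ys) \<noteq> fst (hd cs)"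
    by (rule split_at_first_change)
  have hd_xs: "hd xs = hd cs" and last_ys: "last ys = last cs"
    using cs \<open>xs \<noteq> []\<close> \<open>ys \<noteq> []\<close> by simp_all
  have last_xs: "fst (last xs) = fst (hd cs)" using copy last_in_set[OF \<open>xs \<noteq> []\<close>] by blast
  have "3 \<le> length cs" "distinct cs" "set cs \<subseteq> VC" "successively EC cs" "EC (last cs) (hd cs)"
    using cyc by (simp_all add: is_cycle_iff_successively)
  then have "successively EC (xs @ ys)" using cs by simp
  then have path: "successively EC xs" and "EC (last xs) (hd ys)"
    using \<open>xs \<noteq> []\<close> \<open>ys \<noteq> []\<close> by (simp_all add: successively_append_iff)
  then have F_last: "F (last xs) (hd ys)"
    using last_xs hd_ys unfolding circ_edges_def by auto
  have "F (last cs) (hd cs)"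
    using \<open>EC (last cs) (hd cs)\<close> cross unfolding circ_edges_def by blast
  then have F_hd: "F (hd xs) (last ys)" using F_sym hd_xs last_ys by metis
  have "2 \<le> length xs"
  proof (rule ccontr)
    assume "\<not> 2 \<le> length xs"
    with \<open>xs \<noteq> []\<close> have "hd xs = last xs" by (simp add: hd_conv_nth last_conv_nth)
    then have "F (last xs) (last ys)" using F_hd by simp
    with F_last have "hd ys = last ys" by (rule F_partner_unique)
    moreover have "distinct ys" using \<open>distinct cs\<close> by (simp add: cs)
    ultimately have "length ys \<le> 1"
      using \<open>ys \<noteq> []\<close> by (simp add: hd_conv_nth last_conv_nth nth_eq_iff_index_eq)
    then show False using cs \<open>3 \<le> length cs\<close> \<open>\<not> 2 \<le> length xs\<close> by simp
  qed
  have "is_cycle VA EA (a # map snd xs)"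
  proof (rule is_cycle_Cons_path)
    show "2 \<le> length (map snd xs)" using \<open>2 \<le> length xs\<close> by simp
    show "distinct (map snd xs)"
      using \<open>distinct cs\<close> cs inj_on_snd_if_fst_const[OF copy] by (simp add: distinct_map)
    have "set xs \<subseteq> VC" using \<open>set cs \<subseteq> VC\<close> cs by auto
    then show "set (map snd xs) \<subseteq> VA" and "a \<notin> set (map snd xs)" by auto
    show "a \<in> VA" using root .
    show "successively EA (map snd xs)" using path copy by (rule path_in_copy)
    show "EA a (hd (map snd xs))"
      using F_endpoint_adj_root[OF F_hd] EA_sym \<open>xs \<noteq> []\<close> by (simp add: hd_map)
    show "EA (last (map snd xs)) a"
      using F_endpoint_adj_root[OF F_last] \<open>xs \<noteq> []\<close> by (simp add: last_map)
  qed
  moreover have "length (a # map snd xs) \<le> length cs"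
    using cs \<open>ys \<noteq> []\<close> by (simp add: Suc_le_eq)
  ultimately show ?thesis by blast
qed

lemma ex_cycle_not_longer:
  assumes cyc: "is_cycle VC EC cs"
  shows "\<exists>ds. is_cycle VA EA ds \<and> length ds \<le> length cs"
proof (cases "\<forall>p\<in>set cs. fst p = fst (hd cs)")
  case True
  then show ?thesis using cycle_in_copy[OF cyc] by fastforce
next
  case False
  then have "\<exists>p\<in>set cs. fst p \<noteq> fst (hd cs)" by blast
  then obtain xs ys where cs: "cs = xs @ ys" and "xs \<noteq> []" "ys \<noteq> []"
    and copy: "\<forall>p\<in>set xs. fst p = fst (hd cs)" and hd_ys: "fst (hd ys) \<noteq> fst (hd cs)"
    by (rule split_at_first_change)
  have "fst (last xs) = fst (hd cs)" using copy last_in_set[OF \<open>xs \<noteq> []\<close>] by blast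
  then have "fst (last (ys @ xs)) \<noteq> fst (hd (ys @ xs))"
    using hd_ys \<open>xs \<noteq> []\<close> \<open>ys \<noteq> []\<close> by simp
  moreover have "is_cycle VC EC (ys @ xs)"
    using cyc is_cycle_append_swap by (simp add: cs)
  ultimately have "\<exists>ds. is_cycle VA EA ds \<and> length ds \<le> length (ys @ xs)"
    by (rule cycle_leaving_copy[rotated])
  then show ?thesis by (simp add: cs add.commute)
qed

end

theorem proposition5p17:
  fixes VG :: "'a set" and EG :: "'a \<Rightarrow> 'a \<Rightarrow> bool"
    and VA :: "'b set" and EA :: "'b \<Rightarrow> 'b \<Rightarrow> bool" and a :: 'b
    and F :: "'a \<times> 'b \<Rightarrow> 'a \<times> 'b \<Rightarrow> bool"
  assumes "cubic VG EG" and "cubic VA EA" and "a \<in> VA"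
    and "circ_matching VG EG VA EA a F"
  shows "girth VA EA \<le> girth (VG \<times> (VA - {a})) (circ_edges EA F)"
proof -
  interpret circ_construction VG EG VA EA a F
    using assms by unfold_locales (simp_all add: cubic_def)
  show ?thesis by (rule girth_le_girthI) (rule ex_cycle_not_longer)
qed

end
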